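(* For all $d,N\in\mathbb{N}$, $B_{d,2}(1,\dots,1)=1$, where $(1,\dots,1)\in\mathbb{N}^N$.
   Context: $T_{d,2}=\mathbb{R}\oplus\mathbb{R}^d\oplus\mathbb{R}^{d\times d}$ with truncated tensor product; $\mathfrak{g}_{d,2}$ is the smallest Lie subalgebra (commutator bracket) containing $e_1,\dots,e_d$; $\exp(\mathbf{z})=1+\mathbf{z}+\mathbf{z}^{\otimes2}/2$; $\mathcal{G}_{d,2}=\exp(\mathfrak{g}_{d,2})$ (a group), $\log=\exp^{-1}$. For $\mathbf{x}\in\mathcal{G}_{d,2}^N$, $\mathsf{bary}(\mathbf{x})$ is the unique $\mathbf{m}\in\mathcal{G}_{d,2}$ with $\sum_{i=1}^N\log(\mathbf{m}^{-1}\mathbf{x}_i)=0$. For a path $X:[0,1]\to\mathbb{R}^d$ its $2$-truncated signature is $\sigma(X)=1\oplus(X(1)-X(0))\oplus\big(\int_{0<t_1<t_2<1}\dot X_{w_1}(t_1)\dot X_{w_2}(t_2)\,dt_1dt_2\big)_{w_1,w_2}$. $\mathcal{L}^{\mathrm{im}}_{d,\le 2,m}$ is the set of $\sigma(X)$ for piecewise linear $X$ with $m$ segments, and $B_{d,2}(\alpha)=\min\{m\in\mathbb{N}:\mathsf{bary}(\mathcal{L}^{\mathrm{im}}_{d,\le 2,\alpha_1}\times\dots\times\mathcal{L}^{\mathrm{im}}_{d,\le 2,\alpha_N})\subseteq\mathcal{L}^{\mathrm{im}}_{d,\le 2,m}\}$. *)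

theory Defs
  imports "HOL-Analysis.Analysis"
begin

text \<open>Elements of the truncated tensor algebra T_{d,2} = R + R^d + R^{d x d},
  with R^d = real^'d (d = CARD('d)).\<close>
type_synonym 'd tens = "real \<times> (real^'d) \<times> (real^'d^'d)"

definition outer :: "real^'d \<Rightarrow> real^'d \<Rightarrow> real^'d^'d" where
  "outer a b = (\<chi> i j. a $ i * b $ j)"

definition tmul :: "('d::finite) tens \<Rightarrow> 'd tens \<Rightarrow> 'd tens" where
  "tmul x y = (case x of (a0, a1, a2) \<Rightarrow> case y of (b0, b1, b2) \<Rightarrow>
     (a0 * b0, a0 *\<^sub>R b1 + b0 *\<^sub>R a1, a0 *\<^sub>R b2 + b0 *\<^sub>R a2 + outer a1 b1))"

definition tone :: "('d::finite) tens" where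
  "tone = (1, 0, 0)"

definition tinv :: "('d::finite) tens \<Rightarrow> 'd tens" where
  "tinv x = (THE y. tmul x y = tone \<and> tmul y x = tone)"

definition comm :: "('d::finite) tens \<Rightarrow> 'd tens \<Rightarrow> 'd tens" where
  "comm x y = tmul x y - tmul y x"

definition basis_e :: "('d::finite) \<Rightarrow> 'd tens" where
  "basis_e i = (0, axis i 1, 0)"

definition lie_g :: "('d::finite) tens set" where
  "lie_g = \<Inter> {S. subspace S \<and> (\<forall>x\<in>S. \<forall>y\<in>S. comm x y \<in> S) \<and> (\<forall>i. basis_e i \<in> S)}"

definition texp :: "('d::finite) tens \<Rightarrow> 'd tens" where
  "texp z = tone + z + (1/2) *\<^sub>R tmul z z"

definition grp :: "('d::finite) tens set" where
  "grp = texp ` lie_g"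

definition tlog :: "('d::finite) tens \<Rightarrow> 'd tens" where
  "tlog = inv_into lie_g texp"

definition bary :: "nat \<Rightarrow> (nat \<Rightarrow> ('d::finite) tens) \<Rightarrow> 'd tens" where
  "bary N x = (THE m. m \<in> grp \<and> (\<Sum>i<N. tlog (tmul (tinv m) (x i))) = 0)"

definition sig :: "(real \<Rightarrow> real^('d::finite)) \<Rightarrow> 'd tens" where
  "sig X = (1, X 1 - X 0,
     \<chi> w1 w2. integral {p :: real \<times> real. 0 < fst p \<and> fst p < snd p \<and> snd p < 1}
        (\<lambda>p. vector_derivative X (at (fst p)) $ w1 * vector_derivative X (at (snd p)) $ w2))"

definition pl_path :: "nat \<Rightarrow> (real \<Rightarrow> real^'d) \<Rightarrow> bool" where
  "pl_path m X \<longleftrightarrow>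
     (m = 0 \<and> (\<forall>s\<in>{0..1}. X s = X 0)) \<or>
     (m > 0 \<and> (\<exists>t :: nat \<Rightarrow> real. t 0 = 0 \<and> t m = 1 \<and> (\<forall>k<m. t k \<le> t (Suc k)) \<and>
        (\<forall>k<m. \<exists>u v. \<forall>s\<in>{t k..t (Suc k)}. X s = u + s *\<^sub>R v)))"

definition Lim :: "nat \<Rightarrow> ('d::finite) tens set" where
  "Lim m = {sig X | X. pl_path m X}"

definition Bd2 :: "('d::finite) itself \<Rightarrow> nat \<Rightarrow> (nat \<Rightarrow> nat) \<Rightarrow> nat" where
  "Bd2 _ N \<alpha> = (LEAST m. {bary N x | x. \<forall>i<N. x i \<in> Lim (\<alpha> i)} \<subseteq> (Lim m :: ('d::finite) tens set))"

end

theory Submission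
  imports Defs
begin

text \<open>A linear path with increment v has signature exp v = (1, v, v \<otimes> v / 2), and every such
  element is the signature of a linear path, so the one-segment signatures are exactly the
  exponentials of level-one vectors. For m = exp (c, C) one computes
  log (m^-1 exp v) = (v - c, -C + [v, c] / 2). Summing over N points, the barycentre equation
  forces c to be the mean of the increments, which kills the bracket term and then C;
  so the barycentre of N one-segment signatures is exp of their mean increment, again a
  one-segment signature. Zero segments do not suffice: constant paths have trivial level one,
  whereas the barycentre of N copies of exp e is exp e itself.\<close>

lemma outer_nth [simp]: "outer a b $ i $ j = a $ i * b $ j"
  by (simp add: outer_def)

lemma outer_sum_left: "outer (\<Sum>i\<in>A. f i) b = (\<Sum>i\<in>A. outer (f i) b)"
  by (simp add: vec_eq_iff sum_distrib_right)

lemma outer_sum_right: "outer b (\<Sum>i\<in>A. f i) = (\<Sum>i\<in>A. outer b (f i))"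
  by (simp add: vec_eq_iff sum_distrib_left)

lemma outer_scaleR_self_commute: "outer (r *\<^sub>R a) a = outer a (r *\<^sub>R a)"
  by (simp add: vec_eq_iff)

lemma tmul_Pair: "tmul (a0, a1, a2) (b0, b1, b2) =
  (a0 * b0, a0 *\<^sub>R b1 + b0 *\<^sub>R a1, a0 *\<^sub>R b2 + b0 *\<^sub>R a2 + outer a1 b1)"
  by (simp add: tmul_def)

lemma comm_level1:
  fixes a b :: "real^'d::finite"
  shows "comm (0, a, 0) (0, b, 0) = (0, 0, outer a b - outer b a)"
  by (simp add: comm_def tmul_def)

lemma subspace_lie_g: "subspace (lie_g :: ('d::finite) tens set)"
  unfolding lie_g_def by (rule subspace_Inter) blast

lemma comm_in_lie_g: "x \<in> lie_g \<Longrightarrow> y \<in> lie_g \<Longrightarrow> comm x y \<in> lie_g"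
  unfolding lie_g_def by blast

lemma basis_e_in_lie_g: "basis_e i \<in> lie_g"
  unfolding lie_g_def by blast

lemma lie_g_subset_fst_0: "lie_g \<subseteq> {z :: ('d::finite) tens. fst z = 0}"
proof -
  let ?S = "{z :: 'd tens. fst z = 0}"
  have "subspace ?S" by (auto simp: subspace_def)
  moreover have "\<forall>x\<in>?S. \<forall>y\<in>?S. comm x y \<in> ?S"
    by (auto simp: comm_def tmul_def split: prod.splits)
  moreover have "\<forall>i. basis_e i \<in> ?S" by (simp add: basis_e_def)
  ultimately show ?thesis unfolding lie_g_def by blast
qed

lemma lie_gE:
  assumes "z \<in> lie_g"
  obtains a A where "z = (0, a, A)"
  using lie_g_subset_fst_0 assms by (cases z) auto

lemma level1_in_lie_g: "(0, v, 0) \<in> (lie_g :: ('d::finite) tens set)"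
proof -
  have "(0, v, 0) = (\<Sum>i\<in>UNIV. (v $ i) *\<^sub>R basis_e i :: 'd tens)"
    by (simp add: prod_eq_iff fst_sum snd_sum basis_e_def vec_eq_iff axis_def
        if_distrib[of "\<lambda>x. _ * x"] cong: if_cong)
  also have "\<dots> \<in> lie_g"
    by (intro subspace_sum[OF subspace_lie_g] subspace_scale[OF subspace_lie_g] basis_e_in_lie_g)
  finally show ?thesis .
qed

lemma texp_Pair: "texp (0, a, A) = (1, a, A + (1/2) *\<^sub>R outer a a)"
  by (simp add: texp_def tmul_def tone_def)

lemma inj_on_texp: "inj_on texp (lie_g :: ('d::finite) tens set)"
proof
  fix x y :: "'d tens"
  assume "x \<in> lie_g" "y \<in> lie_g" and eq: "texp x = texp y"
  then obtain a A b B where "x = (0, a, A)" "y = (0, b, B)" by (metis lie_gE)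
  with eq show "x = y" by (auto simp: texp_Pair)
qed

lemma tlog_texp: "z \<in> lie_g \<Longrightarrow> tlog (texp z) = z"
  unfolding tlog_def by (rule inv_into_f_f[OF inj_on_texp])

lemma tinv_Pair: "tinv (1, a, B) = (1, -a, -B + outer a a)"
  unfolding tinv_def
proof (rule the_equality)
  show "tmul (1, a, B) (1, -a, -B + outer a a) = tone \<and> tmul (1, -a, -B + outer a a) (1, a, B) = tone"
    by (simp add: tmul_def tone_def vec_eq_iff algebra_simps)
next
  fix y assume "tmul (1, a, B) y = tone \<and> tmul y (1, a, B) = tone"
  moreover obtain y0 y1 y2 where y: "y = (y0, y1, y2)" by (cases y)
  ultimately have "y0 = 1" "y1 + y0 *\<^sub>R a = 0" "y2 + y0 *\<^sub>R B + outer a y1 = 0"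
    by (auto simp: tmul_Pair tone_def)
  then have "y0 = 1" "y1 = -a" "y2 = -B - outer a y1"
    by (auto simp: algebra_simps eq_neg_iff_add_eq_0)
  then show "y = (1, -a, -B + outer a a)"
    unfolding y by (simp add: vec_eq_iff)
qed

lemma tlog_tmul_tinv_texp:
  fixes c v :: "real^'d::finite"
  assumes "(0, c, C) \<in> lie_g"
  shows "tlog (tmul (tinv (texp (0, c, C))) (texp (0, v, 0))) =
         (0, v - c, -C + (1/2) *\<^sub>R (outer v c - outer c v))"
proof -
  have "tmul (tinv (texp (0, c, C))) (texp (0, v, 0)) =
        texp (0, v - c, -C + (1/2) *\<^sub>R (outer v c - outer c v))"
    unfolding texp_Pair tinv_Pair tmul_Pair by (simp add: vec_eq_iff algebra_simps)
  moreover have "(0, v - c, -C + (1/2) *\<^sub>R (outer v c - outer c v)) =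
        ((0, v, 0) - (0, c, C)) + (1/2) *\<^sub>R comm (0, v, 0) (0, c, 0)"
    by (simp add: comm_level1)
  moreover have "\<dots> \<in> lie_g"
    by (intro subspace_add[OF subspace_lie_g] subspace_diff[OF subspace_lie_g]
        subspace_scale[OF subspace_lie_g] comm_in_lie_g level1_in_lie_g assms)
  ultimately show ?thesis by (simp add: tlog_texp)
qed

lemma sum_tlog_tmul_tinv_texp:
  fixes c :: "real^'d::finite" and v :: "nat \<Rightarrow> real^'d"
  assumes "(0, c, C) \<in> lie_g"
  shows "(\<Sum>i<N. tlog (tmul (tinv (texp (0, c, C))) (texp (0, v i, 0)))) =
         (0, (\<Sum>i<N. v i) - real N *\<^sub>R c,
          - (real N *\<^sub>R C) + (1/2) *\<^sub>R (outer (\<Sum>i<N. v i) c - outer c (\<Sum>i<N. v i)))"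
  unfolding tlog_tmul_tinv_texp[OF assms]
  by (simp only: prod_eq_iff fst_sum snd_sum fst_conv snd_conv sum_subtractf sum.distrib
      outer_sum_left outer_sum_right scaleR_sum_right[symmetric] sum_negf sum_constant_scaleR
      card_lessThan sum.neutral_const) simp

lemma bary_texp_level1:
  fixes v :: "nat \<Rightarrow> real^'d::finite"
  assumes "N \<ge> 1" and x: "\<forall>i<N. x i = texp (0, v i, 0)"
  shows "bary N x = texp (0, (1 / real N) *\<^sub>R (\<Sum>i<N. v i), 0)"
  unfolding bary_def
proof (rule the_equality)
  define m where "m = (1 / real N) *\<^sub>R (\<Sum>i<N. v i)"
  have sum_v: "(\<Sum>i<N. v i) = real N *\<^sub>R m"
    using \<open>N \<ge> 1\<close> unfolding m_def by simp
  have "texp (0, m, 0) \<in> grp"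
    unfolding grp_def using level1_in_lie_g by blast
  moreover have "(\<Sum>i<N. tlog (tmul (tinv (texp (0, m, 0))) (x i))) = 0"
    using x sum_tlog_tmul_tinv_texp[OF level1_in_lie_g, where N = N and c = m and v = v]
    by (simp add: sum_v outer_scaleR_self_commute zero_prod_def)
  ultimately show "texp (0, m, 0) \<in> grp \<and> (\<Sum>i<N. tlog (tmul (tinv (texp (0, m, 0))) (x i))) = 0"
    unfolding m_def by blast
next
  fix g assume g: "g \<in> grp \<and> (\<Sum>i<N. tlog (tmul (tinv g) (x i))) = 0"
  then obtain c C where cC: "(0, c, C) \<in> lie_g" "g = texp (0, c, C)"
    unfolding grp_def by (metis imageE lie_gE)
  have "(\<Sum>i<N. tlog (tmul (tinv (texp (0, c, C))) (texp (0, v i, 0)))) = 0"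
    using g x cC(2) by simp
  then have sum_v: "(\<Sum>i<N. v i) - real N *\<^sub>R c = 0"
    and C: "- (real N *\<^sub>R C) + (1/2) *\<^sub>R (outer (\<Sum>i<N. v i) c - outer c (\<Sum>i<N. v i)) = 0"
    unfolding sum_tlog_tmul_tinv_texp[OF cC(1)] by (simp_all only: zero_prod_def prod.inject)
  have "outer (\<Sum>i<N. v i) c - outer c (\<Sum>i<N. v i) = 0"
    using sum_v by (simp add: outer_scaleR_self_commute)
  with C have "real N *\<^sub>R C = 0"
    by simp
  with \<open>N \<ge> 1\<close> sum_v show "g = texp (0, (1 / real N) *\<^sub>R (\<Sum>i<N. v i), 0)"
    by (simp add: cC(2))
qed

lemma bary_const_texp:
  assumes "N \<ge> 1"
  shows "bary N (\<lambda>_. texp (0, v, 0)) = texp (0, v, 0)"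
  using bary_texp_level1[OF assms, of "\<lambda>_. texp (0, v, 0)" "\<lambda>_. v"] assms
  by (simp add: sum_constant_scaleR del: sum_constant)

lemma emeasure_triangle:
  "emeasure lborel {p :: real \<times> real. 0 < fst p \<and> fst p < snd p \<and> snd p < 1} = ennreal (1/2)"
proof -
  let ?T = "{p :: real \<times> real. 0 < fst p \<and> fst p < snd p \<and> snd p < 1}"
  have "?T \<in> sets (lborel \<Otimes>\<^sub>M lborel)"
    unfolding lborel_prod sets_lborel
    by (intro borel_open open_Collect_conj open_Collect_less continuous_intros)
  then have "emeasure lborel ?T = (\<integral>\<^sup>+x. emeasure lborel (Pair x -` ?T) \<partial>lborel)"
    by (simp add: lborel.emeasure_pair_measure_alt flip: lborel_prod)
  also have "\<dots> = (\<integral>\<^sup>+x. ennreal (if x \<in> {0<..<1} then 1 - x else 0) \<partial>lborel)"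
  proof (rule nn_integral_cong)
    fix x :: real
    have "Pair x -` ?T = (if x \<in> {0<..<1} then {x<..<1} else {})" by auto
    then show "emeasure lborel (Pair x -` ?T) = ennreal (if x \<in> {0<..<1} then 1 - x else 0)"
      by simp
  qed
  also have "\<dots> = ennreal (1/2)"
  proof -
    have "((\<lambda>x::real. 1 - x) has_integral (1 - 1^2/2) - (0 - 0^2/2)) {0..1}"
      by (intro fundamental_theorem_of_calculus)
         (auto intro!: derivative_eq_intros simp flip: has_real_derivative_iff_has_vector_derivative)
    then have "((\<lambda>x::real. 1 - x) has_integral 1/2) {0<..<1}"
      by (simp add: has_integral_Icc_iff_Ioo)
    then have "((\<lambda>x::real. if x \<in> {0<..<1} then 1 - x else 0) has_integral 1/2) UNIV"
      by (rule has_integral_restrict_UNIV[THEN iffD2])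
    then show ?thesis
      by (subst nn_integral_has_integral_lborel) auto
  qed
  finally show ?thesis .
qed

lemma integral_triangle_const:
  "integral {p :: real \<times> real. 0 < fst p \<and> fst p < snd p \<and> snd p < 1} (\<lambda>p. c) = (c::real) / 2"
proof -
  let ?T = "{p :: real \<times> real. 0 < fst p \<and> fst p < snd p \<and> snd p < 1}"
  have "((\<lambda>x. 1) has_integral measure lborel ?T) ?T"
    by (rule has_integral_measure_lborel)
       (auto simp: emeasure_triangle simp del: ennreal_half
             intro!: borel_open open_Collect_conj open_Collect_less continuous_intros)
  moreover have "measure lborel ?T = 1/2"
    unfolding measure_def emeasure_triangle by (simp del: ennreal_half)
  ultimately show ?thesis
    using integral_mult_right[where c = c and S = ?T and f = "\<lambda>_. 1 :: real"]
    by (simp add: integral_unique)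
qed

lemma sig_affine:
  fixes X :: "real \<Rightarrow> real^'d::finite"
  assumes X: "\<forall>s\<in>{0..1}. X s = u + s *\<^sub>R v"
  shows "sig X = texp (0, v, 0)"
proof -
  have "vector_derivative X (at s) = v" if s: "s \<in> {0<..<1}" for s
  proof -
    have "((\<lambda>s. u + s *\<^sub>R v) has_vector_derivative v) (at s)"
      by (auto intro!: derivative_eq_intros)
    then have "(X has_vector_derivative v) (at s)"
      by (rule has_vector_derivative_transform_within_open[where S="{0<..<1}"]) (use s X in auto)
    then show ?thesis by (rule vector_derivative_at)
  qed
  then have "integral {p. 0 < fst p \<and> fst p < snd p \<and> snd p < 1}
      (\<lambda>p. vector_derivative X (at (fst p)) $ w1 * vector_derivative X (at (snd p)) $ w2)
    = v $ w1 * v $ w2 / 2" for w1 w2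
    by (subst integral_cong[where g = "\<lambda>_. v $ w1 * v $ w2"]) (auto simp: integral_triangle_const)
  moreover have "X 1 - X 0 = v" using X by simp
  ultimately show ?thesis
    unfolding sig_def texp_Pair by (simp add: vec_eq_iff)
qed

lemma pl_path_Suc_0_iff: "pl_path (Suc 0) X \<longleftrightarrow> (\<exists>u v. \<forall>s\<in>{0..1}. X s = u + s *\<^sub>R v)"
proof
  assume "pl_path (Suc 0) X"
  then obtain t :: "nat \<Rightarrow> real" where "t 0 = 0" "t (Suc 0) = 1"
    and "\<exists>u v. \<forall>s\<in>{t 0..t (Suc 0)}. X s = u + s *\<^sub>R v"
    unfolding pl_path_def by blast
  then show "\<exists>u v. \<forall>s\<in>{0..1}. X s = u + s *\<^sub>R v" by auto
next
  assume "\<exists>u v. \<forall>s\<in>{0..1}. X s = u + s *\<^sub>R v"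
  then have "\<forall>k<Suc 0. \<exists>u v. \<forall>s\<in>{real k..real (Suc k)}. X s = u + s *\<^sub>R v"
    by simp
  then show "pl_path (Suc 0) X"
    unfolding pl_path_def by (intro disjI2 conjI zero_less_Suc exI[of _ real]) simp_all
qed

lemma Lim_Suc_0_eq: "(Lim (Suc 0) :: ('d::finite) tens set) = range (\<lambda>v. texp (0, v, 0))"
proof (intro equalityI subsetI)
  fix y :: "'d tens" assume "y \<in> Lim (Suc 0)"
  then obtain X u v where "y = sig X" "\<forall>s\<in>{0..1}. X s = u + s *\<^sub>R v"
    unfolding Lim_def pl_path_Suc_0_iff by blast
  then show "y \<in> range (\<lambda>v. texp (0, v, 0))"
    using sig_affine by blast
next
  fix y :: "'d tens" assume "y \<in> range (\<lambda>v. texp (0, v, 0))"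
  then obtain v where y: "y = texp (0, v, 0)" by blast
  have line: "\<forall>s\<in>{0..1}. s *\<^sub>R v = 0 + s *\<^sub>R v" by simp
  then have "pl_path (Suc 0) (\<lambda>s. s *\<^sub>R v)"
    unfolding pl_path_Suc_0_iff by blast
  moreover have "sig (\<lambda>s. s *\<^sub>R v) = y"
    unfolding y using line by (rule sig_affine)
  ultimately show "y \<in> Lim (Suc 0)"
    unfolding Lim_def by blast
qed

lemma texp_level1_notin_Lim_0:
  assumes "v \<noteq> 0"
  shows "texp (0, v, 0) \<notin> Lim 0"
proof
  assume "texp (0, v, 0) \<in> Lim 0"
  then obtain X where sig: "texp (0, v, 0) = sig X" and "pl_path 0 X"
    unfolding Lim_def by blast
  then have "\<forall>s\<in>{0..1}. X s = X 0"
    unfolding pl_path_def by blast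
  then have "X 1 = X 0"
    by (rule bspec) simp
  moreover have "X 1 - X 0 = v"
    using arg_cong[OF sig, of "\<lambda>y. fst (snd y)"] unfolding sig_def texp_Pair by simp
  ultimately show False
    using assms by simp
qed

lemma bary_in_Lim_Suc_0:
  assumes "N \<ge> 1" and "\<forall>i<N. x i \<in> (Lim (Suc 0) :: ('d::finite) tens set)"
  shows "bary N x \<in> Lim (Suc 0)"
proof -
  have "\<forall>i<N. \<exists>v. x i = texp (0, v, 0)"
    using assms(2) unfolding Lim_Suc_0_eq by blast
  then obtain v :: "nat \<Rightarrow> real^'d" where "\<forall>i<N. x i = texp (0, v i, 0)"
    by metis
  then have "bary N x = texp (0, (1 / real N) *\<^sub>R (\<Sum>i<N. v i), 0)"
    by (rule bary_texp_level1[OF assms(1)])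
  then show ?thesis
    unfolding Lim_Suc_0_eq by blast
qed

theorem proposition7p1:
  fixes N :: nat
  assumes "N \<ge> 1"
  shows "Bd2 TYPE('d::finite) N (\<lambda>_. 1) = 1"
proof -
  let ?S = "{bary N x | x. \<forall>i<N. x i \<in> Lim ((\<lambda>_. 1) i)} :: 'd tens set"
  have "?S \<subseteq> Lim 1"
    using bary_in_Lim_Suc_0[OF assms] by force
  moreover have "\<not> ?S \<subseteq> Lim 0"
  proof -
    define e :: "real^'d" where "e = axis undefined 1"
    have "bary N (\<lambda>_. texp (0, e, 0)) \<in> ?S"
      unfolding One_nat_def Lim_Suc_0_eq by blast
    moreover have "bary N (\<lambda>_. texp (0, e, 0)) \<notin> Lim 0"
      unfolding bary_const_texp[OF assms] e_def by (simp add: texp_level1_notin_Lim_0)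
    ultimately show ?thesis
      by blast
  qed
  ultimately show ?thesis
    unfolding Bd2_def
  proof (intro Least_equality)
    fix m assume "?S \<subseteq> Lim m"
    with \<open>\<not> ?S \<subseteq> Lim 0\<close> have "m \<noteq> 0"
      by metis
    then show "1 \<le> m"
      by simp
  qed
qed
end
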